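(* Let $G\in\mathcal{G}$ be a graph, let $t\in T_G$, and let $\epsilon$ be an internal edge of the binary tree $t$. Then there exist a unique tree $t'\in T_G$ with $t'\neq t$ and a unique internal edge $\epsilon'$ of $t'$ such that $t/\epsilon=t'/\epsilon'$ (equality of trees with leaves labeled by the vertices of $G$).
   Context: A graph is a triple $(\Gamma,\sigma,\lambda)$: a finite set $\Gamma$ of flags (half-edges), an involution $\sigma$ of $\Gamma$ (two-element orbits are edges, fixed points are legs), and a partition $\lambda$ of $\Gamma$ whose blocks are the vertices. $\mathcal{G}$ denotes the set of isomorphism classes of directed, connected graphs with labeled input and output legs and without directed cycles (directed: each vertex's flags are split into inputs and outputs, and each edge joins an output flag to an input flag). For two vertices $v,v'$, the thick edge from $v$ to $v'$ is the set of all directed edges from $v$ to $v'$; a directed path/cycle is a sequence of thick edges following directions. Contracting a thick edge $\epsilon$ between $v_i,v_j$ gives the graph $G/\epsilon$ in which $v_i,v_j$ are replaced by the single vertex $(v_i\sqcup v_j)\smallsetminus\{\text{flags of }\epsilon\}$; $\epsilon$ is admissible if $G/\epsilon$ has no directed cycles. For $G$ with $k$ vertices, a contraction sequence is a sequence of $k-1$ thick edges, each admissible in the graph obtained by contracting the previous ones, thus reducing $G$ to a one-vertex graph. To a contraction sequence one associates a binary rooted tree whose leaves are labeled by the vertices of $G$ and whose internal vertices correspond to the successive contractions (the vertex for the $i$-th contraction has as children the subtrees corresponding to the two vertices merged). $T_G$ is the set of such binary trees arising from contraction sequences of $G$ (equivalently, contraction sequences modulo the equivalence identifying sequences with isomorphic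 associated trees). An internal edge of $t$ is an edge between two internal vertices of $t$; $t/\epsilon$ denotes the (no longer binary) tree obtained by contracting it. *)

theory Defs
  imports Main "HOL-Library.Disjoint_Sets"
begin

text \<open>A graph is given by a finite set of flags Gam, an involution sig of Gam,
  a partition lam of Gam (the vertices), and a set inp of input flags
  (the remaining flags Gam - inp are output flags).  Legs are fixed points of sig,
  edges are two-element orbits.  ilab/olab label the input/output legs.\<close>

definition legs :: "'f set \<Rightarrow> ('f \<Rightarrow> 'f) \<Rightarrow> 'f set" where
  "legs Gam sig = {f \<in> Gam. sig f = f}"

definition thick :: "'f set \<Rightarrow> ('f \<Rightarrow> 'f) \<Rightarrow> 'f set \<Rightarrow> 'f set \<Rightarrow> 'f set \<Rightarrow> bool" where
  "thick Gam sig inp v w \<longleftrightarrow> (\<exists>f\<in>v. f \<in> Gam - inp \<and> sig f \<noteq> f \<and> sig f \<in> w)"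

definition thick_rel :: "'f set \<Rightarrow> ('f \<Rightarrow> 'f) \<Rightarrow> 'f set set \<Rightarrow> 'f set \<Rightarrow> ('f set \<times> 'f set) set" where
  "thick_rel Gam sig lam inp = {(v, w). v \<in> lam \<and> w \<in> lam \<and> thick Gam sig inp v w}"

text \<open>Membership in the class \<open>\<G>\<close> (we work with a representative).\<close>
definition graph_G :: "'f set \<Rightarrow> ('f \<Rightarrow> 'f) \<Rightarrow> 'f set set \<Rightarrow> 'f set
    \<Rightarrow> ('f \<Rightarrow> nat) \<Rightarrow> ('f \<Rightarrow> nat) \<Rightarrow> bool" where
  "graph_G Gam sig lam inp ilab olab \<longleftrightarrow>
     finite Gam
   \<and> (\<forall>f\<in>Gam. sig f \<in> Gam \<and> sig (sig f) = f)
   \<and> partition_on Gam lam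
   \<and> inp \<subseteq> Gam
   \<and> (\<forall>f\<in>Gam. sig f \<noteq> f \<longrightarrow> (f \<in> inp \<longleftrightarrow> sig f \<notin> inp))
   \<and> bij_betw ilab (legs Gam sig \<inter> inp) {1..card (legs Gam sig \<inter> inp)}
   \<and> bij_betw olab (legs Gam sig - inp) {1..card (legs Gam sig - inp)}
   \<and> (\<forall>v\<in>lam. \<forall>w\<in>lam. (v, w) \<in> (thick_rel Gam sig lam inp \<union> (thick_rel Gam sig lam inp)\<inverse>)\<^sup>*)
   \<and> acyclic (thick_rel Gam sig lam inp)"

datatype 'v btree = Leaf 'v | Node "'v btree" "'v btree"

fun leaves :: "'v btree \<Rightarrow> 'v set" where
  "leaves (Leaf v) = {v}"
| "leaves (Node a b) = leaves a \<union> leaves b"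

text \<open>A rooted tree with distinctly labeled leaves (no unary vertices) is represented,
  up to isomorphism, by the set of leaf sets of its vertices (its clusters).\<close>
fun clusters :: "'v btree \<Rightarrow> 'v set set" where
  "clusters (Leaf v) = {{v}}"
| "clusters (Node a b) = insert (leaves a \<union> leaves b) (clusters a \<union> clusters b)"

text \<open>The graph obtained after some contractions: its vertices are the merged blocks,
  each recorded by the binary tree of contractions producing it (leaves = original
  vertices).\<close>
definition qrel :: "('v \<Rightarrow> 'v \<Rightarrow> bool) \<Rightarrow> 'v btree set \<Rightarrow> ('v btree \<times> 'v btree) set" where
  "qrel E S = {(a, b). a \<in> S \<and> b \<in> S \<and> a \<noteq> b \<and> (\<exists>v\<in>leaves a. \<exists>w\<in>leaves b. E v w)}"

inductive csteps :: "('v \<Rightarrow> 'v \<Rightarrow> bool) \<Rightarrow> 'v btree set \<Rightarrow> 'v btree set \<Rightarrow> bool" for E where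
  refl: "csteps E S S"
| step: "csteps E S S' \<Longrightarrow> a \<in> S' \<Longrightarrow> b \<in> S' \<Longrightarrow> (a, b) \<in> qrel E S'
         \<Longrightarrow> acyclic (qrel E (insert (Node a b) (S' - {a, b})))
         \<Longrightarrow> csteps E S (insert (Node a b) (S' - {a, b}))"

definition T_G :: "'f set \<Rightarrow> ('f \<Rightarrow> 'f) \<Rightarrow> 'f set set \<Rightarrow> 'f set \<Rightarrow> 'f set set set set" where
  "T_G Gam sig lam inp =
     {clusters t | t. csteps (thick Gam sig inp) (Leaf ` lam) {t}}"

text \<open>Internal edge of a tree (given by its clusters): an edge from a parent to a child
  vertex C with both internal, i.e. C is neither a leaf nor the root.  Contracting it
  removes the cluster C.\<close>
definition internal_edge :: "'v set set \<Rightarrow> 'v set \<Rightarrow> bool" where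
  "internal_edge H C \<longleftrightarrow> C \<in> H \<and> 2 \<le> card C \<and> C \<noteq> \<Union>H"

definition contract_edge :: "'v set set \<Rightarrow> 'v set \<Rightarrow> 'v set set" where
  "contract_edge H C = H - {C}"

end

theory Submission
  imports Defs
begin

text \<open>
  Let the internal edge lie above the cluster \<open>C = A \<union> B\<close>, whose sibling is \<open>D\<close>. Contracting it
  leaves a vertex with the three children \<open>A\<close>, \<open>B\<close>, \<open>D\<close>, and the binary trees that
  contract to the same tree are exactly the three ways of pairing them, with new cluster
  \<open>A \<union> B\<close>, \<open>A \<union> D\<close> or \<open>B \<union> D\<close>. So uniqueness means that at most one of the two
  alternative pairings comes from a contraction sequence, and existence that one does.

  Whenever a split \<open>Y | Z\<close> occurs in a contraction tree, the graph has edges between \<open>Y\<close>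
  and \<open>Z\<close> in exactly one direction: the merge producing it used an edge, and a return edge
  would make the contracted graph cyclic. For three blocks this cannot hold for all three
  pairings at once, which gives uniqueness. For existence, the merge of \<open>A\<close> with \<open>B\<close> is
  postponed until \<open>C\<close> is merged with \<open>D\<close> (splitting a block whose parts are joined by
  edges in one direction only keeps the graph acyclic); the edge directions then allow
  \<open>D\<close> to be merged first with \<open>A\<close> or with \<open>B\<close>, and the rest of the sequence is replayed
  with the rotated subtree in place of the old one.
\<close>

section \<open>Subtrees and clusters of binary trees\<close>

fun subtrees :: "'v btree \<Rightarrow> 'v btree set" where
  "subtrees (Leaf v) = {Leaf v}"
| "subtrees (Node a b) = insert (Node a b) (subtrees a \<union> subtrees b)"

fun distinct_leaves :: "'v btree \<Rightarrow> bool" where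
  "distinct_leaves (Leaf v) = True"
| "distinct_leaves (Node a b) \<longleftrightarrow>
     distinct_leaves a \<and> distinct_leaves b \<and> leaves a \<inter> leaves b = {}"

lemma leaves_nonempty [simp]: "leaves u \<noteq> {}"
  by (induction u) auto

lemma finite_leaves [simp]: "finite (leaves u)"
  by (induction u) auto

lemma subtrees_refl [simp]: "u \<in> subtrees u"
  by (cases u) auto

lemma subtrees_trans: "x \<in> subtrees u \<Longrightarrow> subtrees x \<subseteq> subtrees u"
  by (induction u) auto

lemma leaves_subtree: "x \<in> subtrees u \<Longrightarrow> leaves x \<subseteq> leaves u"
  by (induction u) auto

lemma clusters_subtree: "x \<in> subtrees u \<Longrightarrow> clusters x \<subseteq> clusters u"
  by (induction u) auto

lemma distinct_leaves_subtree: "distinct_leaves u \<Longrightarrow> x \<in> subtrees u \<Longrightarrow> distinct_leaves x"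
  by (induction u) auto

lemma leaves_in_clusters [simp]: "leaves u \<in> clusters u"
  by (cases u) auto

lemma cluster_subset_leaves: "X \<in> clusters u \<Longrightarrow> X \<subseteq> leaves u"
  by (induction u) auto

lemma Union_clusters: "\<Union>(clusters u) = leaves u"
  using cluster_subset_leaves leaves_in_clusters by blast

lemma cluster_nonempty: "X \<in> clusters u \<Longrightarrow> X \<noteq> {}"
  by (induction u) auto

lemma finite_cluster: "X \<in> clusters u \<Longrightarrow> finite X"
  using cluster_subset_leaves finite_leaves finite_subset by metis

lemma cluster_subtree_ex: "X \<in> clusters u \<Longrightarrow> \<exists>x\<in>subtrees u. leaves x = X"
  by (induction u) auto

lemma cluster_child_ex:
  "X \<in> clusters u \<Longrightarrow> X \<noteq> leaves u \<Longrightarrow> \<exists>y z. Node y z \<in> subtrees u \<and> (leaves y = X \<or> leaves z = X)"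
  by (induction u) (auto 4 3)

lemma clusters_disjoint: "leaves x \<inter> leaves y = {} \<Longrightarrow> clusters x \<inter> clusters y = {}"
  using cluster_subset_leaves cluster_nonempty by blast

lemma clusters_three:
  "clusters (Node (Node x y) z) =
     insert (leaves x \<union> leaves y \<union> leaves z) (insert (leaves x \<union> leaves y) (clusters x \<union> clusters y \<union> clusters z))"
  "clusters (Node z (Node x y)) =
     insert (leaves x \<union> leaves y \<union> leaves z) (insert (leaves x \<union> leaves y) (clusters x \<union> clusters y \<union> clusters z))"
  by auto

section \<open>Binary hierarchies\<close>

definition laminar :: "'a set set \<Rightarrow> bool" where
  "laminar H \<longleftrightarrow> (\<forall>X\<in>H. \<forall>Y\<in>H. X \<subseteq> Y \<or> Y \<subseteq> X \<or> X \<inter> Y = {})"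

lemma laminarD: "laminar H \<Longrightarrow> X \<in> H \<Longrightarrow> Y \<in> H \<Longrightarrow> X \<subseteq> Y \<or> Y \<subseteq> X \<or> X \<inter> Y = {}"
  unfolding laminar_def by blast

lemma laminar_clusters: "distinct_leaves u \<Longrightarrow> laminar (clusters u)"
proof (induction u)
  case (Node a b)
  then show ?case
    using cluster_subset_leaves[of _ a] cluster_subset_leaves[of _ b]
    unfolding laminar_def clusters.simps distinct_leaves.simps
    by (smt (verit) Un_iff insert_iff disjoint_iff subset_iff)
qed (simp add: laminar_def)

lemma cluster_cases_subtree:
  "distinct_leaves u \<Longrightarrow> x \<in> subtrees u \<Longrightarrow> W \<in> clusters u \<Longrightarrow>
     W \<in> clusters x \<or> leaves x \<subseteq> W \<or> W \<inter> leaves x = {}"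
proof (induction u)
  case (Node a b)
  have disj: "leaves a \<inter> leaves b = {}"
    using Node.prems(1) by simp
  consider "x = Node a b" | "x \<in> subtrees a" | "x \<in> subtrees b"
    using Node.prems(2) by auto
  then show ?case
  proof cases
    case 2
    then show ?thesis
      using Node leaves_subtree[OF 2] cluster_subset_leaves[of W b] disj by auto
  next
    case 3
    then show ?thesis
      using Node leaves_subtree[OF 3] cluster_subset_leaves[of W a] disj by auto
  qed (use Node.prems(3) in auto)
qed simp

definition splits :: "'a set set \<Rightarrow> 'a set \<Rightarrow> 'a set \<Rightarrow> 'a set \<Rightarrow> bool" where
  "splits H X Y Z \<longleftrightarrow> X \<in> H \<and> Y \<in> H \<and> Z \<in> H \<and> Y \<noteq> {} \<and> Z \<noteq> {} \<and> Y \<inter> Z = {} \<and> X = Y \<union> Z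
     \<and> (\<forall>W\<in>H. W \<subset> X \<longrightarrow> W \<subseteq> Y \<or> W \<subseteq> Z)"

lemma splitsI:
  "X \<in> H \<Longrightarrow> Y \<in> H \<Longrightarrow> Z \<in> H \<Longrightarrow> Y \<noteq> {} \<Longrightarrow> Z \<noteq> {} \<Longrightarrow> Y \<inter> Z = {} \<Longrightarrow> X = Y \<union> Z
   \<Longrightarrow> (\<And>W. W \<in> H \<Longrightarrow> W \<subset> X \<Longrightarrow> W \<subseteq> Y \<or> W \<subseteq> Z) \<Longrightarrow> splits H X Y Z"
  unfolding splits_def by blast

lemma splitsD:
  assumes "splits H X Y Z"
  shows "X \<in> H" "Y \<in> H" "Z \<in> H" "Y \<noteq> {}" "Z \<noteq> {}" "Y \<inter> Z = {}" "X = Y \<union> Z"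
  using assms unfolding splits_def by blast+

lemma splits_subset: "splits H X Y Z \<Longrightarrow> W \<in> H \<Longrightarrow> W \<subset> X \<Longrightarrow> W \<subseteq> Y \<or> W \<subseteq> Z"
  unfolding splits_def by blast

lemma splits_sym: "splits H X Y Z \<Longrightarrow> splits H X Z Y"
  unfolding splits_def by blast

lemma splits_part_eq:
  assumes "splits H X Y Z" "X = U \<union> W" "U \<inter> W = {}" "U \<in> H" "W \<in> H" "U \<noteq> {}" "W \<noteq> {}"
  shows "U = Y \<or> U = Z"
proof -
  note D = splitsD[OF assms(1)]
  have "U \<subset> X" "W \<subset> X"
    using assms(2,3,6,7) by blast+
  then have U: "U \<subseteq> Y \<or> U \<subseteq> Z" and W: "W \<subseteq> Y \<or> W \<subseteq> Z"
    using splits_subset[OF assms(1)] assms(4,5) by blast+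
  have "\<not> (U \<subseteq> Y \<and> W \<subseteq> Y)" "\<not> (U \<subseteq> Z \<and> W \<subseteq> Z)"
    using D assms(2) by blast+
  with U W consider "U \<subseteq> Y" "W \<subseteq> Z" | "U \<subseteq> Z" "W \<subseteq> Y"
    by blast
  then show ?thesis
    by cases (use D assms(2,3) in auto)
qed

lemma splits_unique:
  assumes "splits H X Y Z" "splits H X Y' Z'"
  shows "Y' = Y \<and> Z' = Z \<or> Y' = Z \<and> Z' = Y"
proof -
  note D = splitsD[OF assms(1)] splitsD[OF assms(2)]
  have "Y' = Y \<or> Y' = Z"
    using splits_part_eq[OF assms(1)] D by blast
  then show ?thesis
    using D by auto
qed

lemma splits_parent_unique:
  assumes "laminar H" "splits H P C D" "splits H Q C L"
  shows "P = Q \<and> D = L"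
proof -
  note D = splitsD[OF assms(2)] splitsD[OF assms(3)]
  have "\<not> P \<subset> Q"
  proof
    assume "P \<subset> Q"
    then have "P \<subseteq> C \<or> P \<subseteq> L"
      using splits_subset[OF assms(3)] D(1) by blast
    then show False
      using D by blast
  qed
  moreover have "\<not> Q \<subset> P"
  proof
    assume "Q \<subset> P"
    then have "Q \<subseteq> C \<or> Q \<subseteq> D"
      using splits_subset[OF assms(2)] D(8) by blast
    then show False
      using D by blast
  qed
  moreover have "P \<subseteq> Q \<or> Q \<subseteq> P"
    using laminarD[OF assms(1) D(1) D(8)] D by blast
  ultimately have "P = Q"
    by blast
  then show ?thesis
    using D by auto
qed

lemma splits_three:
  assumes "splits H Q N1 N2" "X \<in> H" "Y \<in> H" "W \<in> H" "X \<noteq> {}" "Y \<noteq> {}" "W \<noteq> {}"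
    "X \<inter> Y = {}" "X \<inter> W = {}" "Y \<inter> W = {}" "Q = X \<union> Y \<union> W"
  shows "splits H Q (X \<union> Y) W \<or> splits H Q (X \<union> W) Y \<or> splits H Q (Y \<union> W) X"
proof -
  have sub: "X \<subset> Q" "Y \<subset> Q" "W \<subset> Q"
    using assms(5-11) by blast+
  have "?thesis" if M: "splits H Q M1 M2" "W \<subseteq> M1" for M1 M2
  proof -
    note D = splitsD[OF M(1)]
    have union: "X \<union> Y \<union> W = M1 \<union> M2"
      using D(7) assms(11) by simp
    have "X \<subseteq> M1 \<or> X \<subseteq> M2" "Y \<subseteq> M1 \<or> Y \<subseteq> M2"
      using splits_subset[OF M(1)] sub assms(2,3) by blast+
    moreover have "\<not> (X \<subseteq> M1 \<and> Y \<subseteq> M1)"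
      using union D(5,6) M(2) by blast
    ultimately consider "X \<subseteq> M2" "Y \<subseteq> M2" | "X \<subseteq> M1" "Y \<subseteq> M2" | "Y \<subseteq> M1" "X \<subseteq> M2"
      by blast
    then show ?thesis
    proof cases
      case 1
      then have "M1 = W" "M2 = X \<union> Y"
        using union D(6) M(2) assms(8-10) by blast+
      then show ?thesis
        using splits_sym M(1) by blast
    next
      case 2
      then have "M1 = X \<union> W" "M2 = Y"
        using union D(6) M(2) assms(8-10) by blast+
      then show ?thesis
        using M(1) by blast
    next
      case 3
      then have "M1 = Y \<union> W" "M2 = X"
        using union D(6) M(2) assms(8-10) by blast+
      then show ?thesis
        using M(1) by blast
    qed
  qed
  moreover have "W \<subseteq> N1 \<or> W \<subseteq> N2"
    using splits_subset[OF assms(1) assms(4) sub(3)] .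
  ultimately show ?thesis
    using assms(1) splits_sym by blast
qed

lemma splits_Node:
  assumes "distinct_leaves u" "Node y z \<in> subtrees u"
  shows "splits (clusters u) (leaves y \<union> leaves z) (leaves y) (leaves z)"
proof (rule splitsI)
  have sub: "clusters (Node y z) \<subseteq> clusters u"
    using clusters_subtree[OF assms(2)] .
  then show "leaves y \<union> leaves z \<in> clusters u" "leaves y \<in> clusters u" "leaves z \<in> clusters u"
    by auto
  show "leaves y \<inter> leaves z = {}"
    using distinct_leaves_subtree[OF assms] by simp
next
  fix W assume W: "W \<in> clusters u" "W \<subset> leaves y \<union> leaves z"
  then have "W \<in> clusters (Node y z)"
    using cluster_cases_subtree[OF assms W(1)] cluster_nonempty[OF W(1)] by auto
  then have "W \<in> clusters y \<or> W \<in> clusters z"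
    using W(2) by auto
  then show "W \<subseteq> leaves y \<or> W \<subseteq> leaves z"
    using cluster_subset_leaves by blast
qed simp_all

lemma splits_clusters_Node:
  assumes "distinct_leaves u" "x \<in> subtrees u" "splits (clusters u) (leaves x) Y Z"
  obtains y z where "x = Node y z \<or> x = Node z y" "leaves y = Y" "leaves z = Z"
proof (cases x)
  case (Leaf v)
  then have "Y \<union> Z = {v}"
    using splitsD(7)[OF assms(3)] by simp
  then show ?thesis
    using splitsD(4-6)[OF assms(3)] by (auto simp: Un_singleton_iff)
next
  case (Node y z)
  then have "splits (clusters u) (leaves x) (leaves y) (leaves z)"
    using splits_Node assms(1,2) by fastforce
  then show ?thesis
    using splits_unique[OF assms(3)] that Node by metis
qed

definition binary_hierarchy :: "'a set set \<Rightarrow> bool" where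
  "binary_hierarchy H \<longleftrightarrow> laminar H \<and> (\<forall>X\<in>H. finite X)
     \<and> (\<forall>X\<in>H. 2 \<le> card X \<longrightarrow> (\<exists>Y Z. splits H X Y Z))
     \<and> (\<forall>X\<in>H. X \<noteq> \<Union>H \<longrightarrow> (\<exists>Q W. splits H Q X W))"

lemma binary_hierarchy_laminar: "binary_hierarchy H \<Longrightarrow> laminar H"
  unfolding binary_hierarchy_def by blast

lemma binary_hierarchy_finite: "binary_hierarchy H \<Longrightarrow> X \<in> H \<Longrightarrow> finite X"
  unfolding binary_hierarchy_def by blast

lemma binary_hierarchy_children:
  assumes "binary_hierarchy H" "X \<in> H" "2 \<le> card X"
  obtains Y Z where "splits H X Y Z"
  using assms unfolding binary_hierarchy_def by blast

lemma binary_hierarchy_parent: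
  assumes "binary_hierarchy H" "X \<in> H" "X \<noteq> \<Union>H"
  obtains Q W where "splits H Q X W"
  using assms unfolding binary_hierarchy_def by blast

lemma binary_hierarchy_clusters:
  assumes "distinct_leaves u"
  shows "binary_hierarchy (clusters u)"
  unfolding binary_hierarchy_def
proof (intro conjI ballI impI)
  show "laminar (clusters u)"
    using laminar_clusters[OF assms] .
  fix X assume X: "X \<in> clusters u"
  show "finite X"
    using finite_cluster[OF X] .
  show "\<exists>Y Z. splits (clusters u) X Y Z" if two: "2 \<le> card X"
  proof -
    obtain x where x: "x \<in> subtrees u" "leaves x = X"
      using cluster_subtree_ex[OF X] by blast
    then obtain y z where "x = Node y z"
      using two by (cases x) auto
    then show ?thesis
      using splits_Node[OF assms] x by auto
  qed
  show "\<exists>Q W. splits (clusters u) Q X W" if nonroot: "X \<noteq> \<Union>(clusters u)"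
  proof -
    obtain y z where yz: "Node y z \<in> subtrees u" "leaves y = X \<or> leaves z = X"
      using cluster_child_ex[OF X] nonroot Union_clusters by metis
    then show ?thesis
      using splits_Node[OF assms yz(1)] splits_sym by blast
  qed
qed

lemma internal_edge_splits:
  assumes "binary_hierarchy H" "internal_edge H C"
  obtains A B P D where "splits H C A B" "splits H P C D"
  using assms binary_hierarchy_children binary_hierarchy_parent
  unfolding internal_edge_def by metis

lemma flip_not_in:
  assumes "laminar t" "splits t C A B" "splits t P C D"
  shows "A \<union> D \<notin> t"
proof
  note DC = splitsD[OF assms(2)] and DP = splitsD[OF assms(3)]
  assume "A \<union> D \<in> t"
  then have "A \<union> D \<subseteq> C \<or> C \<subseteq> A \<union> D \<or> (A \<union> D) \<inter> C = {}"
    using laminarD[OF assms(1) _ DC(1)] by blast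
  moreover have "\<not> A \<union> D \<subseteq> C"
    using DP(5,6) by blast
  moreover have "\<not> C \<subseteq> A \<union> D"
    using DC(5-7) DP(6) by blast
  moreover have "(A \<union> D) \<inter> C \<noteq> {}"
    using DC(4,7) by blast
  ultimately show False
    by blast
qed

lemma flip_splits:
  assumes "laminar t" "splits t C A B" "splits t P C D"
  defines "t' \<equiv> insert (A \<union> D) (t - {C})"
  shows "splits t' (A \<union> D) A D" "splits t' P (A \<union> D) B"
proof -
  note DC = splitsD[OF assms(2)] and DP = splitsD[OF assms(3)]
  have AD: "A \<inter> D = {}" "(A \<union> D) \<inter> B = {}"
    using DC(6,7) DP(6) by blast+
  have "A \<noteq> C" "B \<noteq> C" "D \<noteq> C" "P \<noteq> C"
    using DC(4-7) DP(4-7) by blast+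
  then have in_t': "A \<union> D \<in> t'" "A \<in> t'" "B \<in> t'" "D \<in> t'" "P \<in> t'"
    using DC(2,3) DP(1,3) unfolding t'_def by blast+
  have P: "P = (A \<union> D) \<union> B"
    using DC(7) DP(7) by blast
  have "A \<union> D \<noteq> {}"
    using DC(4) by blast
  show "splits t' (A \<union> D) A D"
  proof (rule splitsI[OF in_t'(1,2,4) DC(4) DP(5) AD(1) HOL.refl])
    fix W assume W: "W \<in> t'" "W \<subset> A \<union> D"
    then have "W \<in> t"
      unfolding t'_def by auto
    then have "W \<subseteq> C \<or> C \<subseteq> W \<or> W \<inter> C = {}"
      using laminarD[OF assms(1) _ DC(1)] by blast
    moreover have "\<not> C \<subseteq> W"
      using W(2) DC(5,7) AD(2) by blast
    ultimately show "W \<subseteq> A \<or> W \<subseteq> D"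
      using W(2) DC(7) DP(6) by blast
  qed
  show "splits t' P (A \<union> D) B"
  proof (rule splitsI[OF in_t'(5,1,3) \<open>A \<union> D \<noteq> {}\<close> DC(5) AD(2) P])
    fix W assume W: "W \<in> t'" "W \<subset> P"
    show "W \<subseteq> A \<union> D \<or> W \<subseteq> B"
    proof (cases "W = A \<union> D")
      case False
      then have Wt: "W \<in> t" "W \<noteq> C"
        using W(1) unfolding t'_def by auto
      have "W \<subseteq> C \<or> W \<subseteq> D"
        using splits_subset[OF assms(3) Wt(1) W(2)] .
      moreover have "W \<subseteq> A \<or> W \<subseteq> B" if "W \<subseteq> C"
        using splits_subset[OF assms(2) Wt(1)] that Wt(2) by blast
      ultimately show ?thesis
        by blast
    qed simp
  qed
qed

lemma flip_internal_edge:
  assumes "binary_hierarchy t" "splits t C A B" "splits t P C D"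
  shows "internal_edge (insert (A \<union> D) (t - {C})) (A \<union> D)"
  unfolding internal_edge_def
proof (intro conjI)
  note DC = splitsD[OF assms(2)] and DP = splitsD[OF assms(3)]
  have "finite A" "finite D"
    using binary_hierarchy_finite[OF assms(1)] DC(2) DP(3) by blast+
  moreover have "A \<inter> D = {}"
    using DC(7) DP(6) by blast
  ultimately have "card (A \<union> D) = card A + card D"
    by (rule card_Un_disjoint)
  moreover have "card A \<ge> 1" "card D \<ge> 1"
    using \<open>finite A\<close> \<open>finite D\<close> DC(4) DP(5) by (auto simp: Suc_le_eq card_gt_0_iff)
  ultimately show "2 \<le> card (A \<union> D)"
    by simp
  have "B \<in> insert (A \<union> D) (t - {C})"
    using DC(3-7) by blast
  moreover have "B \<inter> (A \<union> D) = {}"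
    using DC(6,7) DP(6) by blast
  ultimately show "A \<union> D \<noteq> \<Union>(insert (A \<union> D) (t - {C}))"
    using DC(5) by blast
qed simp

lemma insert_remove_eq:
  assumes "H' \<noteq> H" "X' \<in> H'" "X \<in> H" "H' - {X'} = H - {X}"
  shows "X' \<notin> H" "H' = insert X' (H - {X})"
  using assms by blast+

lemma flip_candidates:
  assumes t: "binary_hierarchy t" and t': "binary_hierarchy t'"
    and C: "splits t C A B" and P: "splits t P C D"
    and e': "internal_edge t' e'" and eq: "t' - {e'} = t - {C}" and ne: "t' \<noteq> t"
  shows "e' = A \<union> D \<or> e' = B \<union> D"
proof -
  have e'_in: "e' \<in> t'" "2 \<le> card e'" "e' \<noteq> \<Union>t'"
    using e' unfolding internal_edge_def by auto
  note t'_eq = insert_remove_eq[OF ne e'_in(1) splitsD(1)[OF C] eq]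
  obtain X Y where X: "splits t' e' X Y"
    using binary_hierarchy_children[OF t' e'_in(1,2)] .
  obtain Q W where Q: "splits t' Q e' W"
    using binary_hierarchy_parent[OF t' e'_in(1,3)] .
  note DX = splitsD[OF X] and DQ = splitsD[OF Q]
  have "X \<noteq> e'" "Y \<noteq> e'" "W \<noteq> e'" "Q \<noteq> e'"
    using DX(4-7) DQ(4-7) by blast+
  then have in_t: "X \<in> t" "Y \<in> t" "W \<in> t" "Q \<in> t"
    using DX(2,3) DQ(1,3) t'_eq(2) by blast+
  have "card e' \<le> card Q"
    using card_mono[OF binary_hierarchy_finite[OF t' DQ(1)]] DQ(7) by blast
  then obtain N1 N2 where "splits t Q N1 N2"
    using binary_hierarchy_children[OF t in_t(4)] e'_in(2) by fastforce
  then have "splits t Q (X \<union> Y) W \<or> splits t Q (X \<union> W) Y \<or> splits t Q (Y \<union> W) X"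
    by (rule splits_three) (use in_t DX DQ in blast)+
  moreover have "\<not> splits t Q (X \<union> Y) W"
    using splitsD(2) t'_eq(1) DX(7) by metis
  moreover have regroup: "e' = U \<union> D \<and> (U = A \<or> U = B)"
    if S: "splits t Q (U \<union> W) V" and UV: "e' = U \<union> V" "U \<inter> V = {}" "U \<noteq> {}" "V \<noteq> {}" "U \<in> t"
    for U V
  proof -
    have "U \<union> W = C"
    proof (rule ccontr)
      assume "U \<union> W \<noteq> C"
      then have "U \<union> W \<in> t'"
        using splitsD(2)[OF S] t'_eq(2) by blast
      then have "U \<union> W \<subseteq> e' \<or> e' \<subseteq> U \<union> W \<or> (U \<union> W) \<inter> e' = {}"
        using laminarD[OF binary_hierarchy_laminar[OF t'] _ e'_in(1)] by blast
      then show False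
        using UV(1-4) DQ(5,6) by blast
    qed
    then have "P = Q \<and> D = V"
      using splits_parent_unique[OF binary_hierarchy_laminar[OF t] P] S by blast
    moreover have "U = A \<or> U = B"
      using splits_part_eq[OF C \<open>U \<union> W = C\<close>[symmetric]] UV(1,3,5) DQ(5,6) in_t(3) by blast
    ultimately show ?thesis
      using UV(1) by blast
  qed
  ultimately show ?thesis
    using regroup[of X Y] regroup[of Y X] DX in_t by blast
qed

section \<open>Contraction sequences\<close>

definition has_edge :: "('v \<Rightarrow> 'v \<Rightarrow> bool) \<Rightarrow> 'v set \<Rightarrow> 'v set \<Rightarrow> bool" where
  "has_edge E X Y \<longleftrightarrow> (\<exists>v\<in>X. \<exists>w\<in>Y. E v w)"

lemma has_edge_Un [simp]:
  "has_edge E (X \<union> Y) Z \<longleftrightarrow> has_edge E X Z \<or> has_edge E Y Z"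
  "has_edge E Z (X \<union> Y) \<longleftrightarrow> has_edge E Z X \<or> has_edge E Z Y"
  unfolding has_edge_def by blast+

lemma has_edge_mono: "has_edge E X Y \<Longrightarrow> X \<subseteq> X' \<Longrightarrow> Y \<subseteq> Y' \<Longrightarrow> has_edge E X' Y'"
  unfolding has_edge_def by blast

lemma qrel_iff:
  "(a, b) \<in> qrel E S \<longleftrightarrow> a \<in> S \<and> b \<in> S \<and> a \<noteq> b \<and> has_edge E (leaves a) (leaves b)"
  unfolding qrel_def has_edge_def by auto

definition one_way :: "('v \<Rightarrow> 'v \<Rightarrow> bool) \<Rightarrow> 'v set \<Rightarrow> 'v set \<Rightarrow> bool" where
  "one_way E Y Z \<longleftrightarrow> has_edge E Y Z \<noteq> has_edge E Z Y"

lemma one_way_sym: "one_way E Y Z \<Longrightarrow> one_way E Z Y"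
  unfolding one_way_def by blast

text \<open>If the three pairs are one-way, the directions form a tournament on \<open>A\<close>, \<open>B\<close>, \<open>D\<close>;
  its middle vertex (or, for a cyclic one, any vertex) has the two others on opposite sides,
  so that vertex is not one-way against the union of the other two.\<close>
lemma one_way_pairings_contradict:
  "one_way E A B \<Longrightarrow> one_way E (A \<union> B) D \<Longrightarrow> one_way E A D \<Longrightarrow> one_way E (A \<union> D) B
   \<Longrightarrow> one_way E B D \<Longrightarrow> one_way E (B \<union> D) A \<Longrightarrow> False"
  unfolding one_way_def has_edge_Un by blast

lemma acyclic_asym: "acyclic r \<Longrightarrow> (x, y) \<in> r \<Longrightarrow> (y, x) \<notin> r"
  unfolding acyclic_def by (meson r_into_trancl trancl_into_trancl)

lemma acyclic_collapse:
  assumes edge: "\<And>x y. (x, y) \<in> r \<Longrightarrow> (f x, f y) \<in> s \<or> f x = f y \<and> (x, y) \<in> c"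
    and "acyclic s" "acyclic c"
  shows "acyclic r"
proof -
  have path: "(f x, f y) \<in> s\<^sup>+ \<or> f x = f y \<and> (x, y) \<in> c\<^sup>+" if "(x, y) \<in> r\<^sup>+" for x y
    using that
  proof (induction rule: trancl_induct)
    case (base y)
    then show ?case
      using edge by blast
  next
    case (step y z)
    from edge[OF step.hyps(2)] step.IH show ?case
      by (metis trancl.r_into_trancl trancl.trancl_into_trancl)
  qed
  show ?thesis
    using path assms(2,3) unfolding acyclic_def by blast
qed

definition disjoint_forest :: "'v btree set \<Rightarrow> bool" where
  "disjoint_forest S \<longleftrightarrow> (\<forall>u\<in>S. distinct_leaves u)
     \<and> (\<forall>u\<in>S. \<forall>w\<in>S. u \<noteq> w \<longrightarrow> leaves u \<inter> leaves w = {})"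

lemma disjoint_forest_Leaf: "disjoint_forest (Leaf ` V)"
  unfolding disjoint_forest_def by auto

lemma disjoint_forest_distinct_leaves: "disjoint_forest S \<Longrightarrow> u \<in> S \<Longrightarrow> distinct_leaves u"
  unfolding disjoint_forest_def by blast

lemma disjoint_forest_disjoint:
  "disjoint_forest S \<Longrightarrow> u \<in> S \<Longrightarrow> w \<in> S \<Longrightarrow> u \<noteq> w \<Longrightarrow> leaves u \<inter> leaves w = {}"
  unfolding disjoint_forest_def by blast

lemma disjoint_forest_leaves_subset:
  "disjoint_forest S \<Longrightarrow> u \<in> S \<Longrightarrow> w \<in> S \<Longrightarrow> leaves u \<subseteq> leaves w \<Longrightarrow> u = w"
  by (metis disjoint_forest_disjoint inf.absorb1 leaves_nonempty)

lemma disjoint_forest_merge: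
  "disjoint_forest S \<Longrightarrow> a \<in> S \<Longrightarrow> b \<in> S \<Longrightarrow> a \<noteq> b \<Longrightarrow> disjoint_forest (insert (Node a b) (S - {a, b}))"
  unfolding disjoint_forest_def by auto

lemma disjoint_forest_inj_on:
  "disjoint_forest S \<Longrightarrow> (\<And>u. u \<in> S \<Longrightarrow> leaves (f u) = leaves u) \<Longrightarrow> inj_on f S"
  unfolding inj_on_def by (metis disjoint_forest_leaves_subset order_refl)

lemma csteps_disjoint_forest: "csteps E X Y \<Longrightarrow> disjoint_forest X \<Longrightarrow> disjoint_forest Y"
  by (induction rule: csteps.induct) (auto intro: disjoint_forest_merge simp: qrel_iff)

lemma csteps_acyclic: "csteps E X Y \<Longrightarrow> acyclic (qrel E X) \<Longrightarrow> acyclic (qrel E Y)"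
  by (induction rule: csteps.induct) auto

lemma csteps_trans:
  assumes "csteps E X Y" "csteps E Y Z"
  shows "csteps E X Z"
  using assms(2,1) by (induction rule: csteps.induct) (auto intro: csteps.step)

lemma csteps_leaves_mono: "csteps E X Y \<Longrightarrow> u \<in> X \<Longrightarrow> \<exists>w\<in>Y. leaves u \<subseteq> leaves w"
proof (induction rule: csteps.induct)
  case (step S S' a b)
  then obtain w where w: "w \<in> S'" "leaves u \<subseteq> leaves w"
    by blast
  show ?case
  proof (cases "w = a \<or> w = b")
    case True
    then have "leaves u \<subseteq> leaves (Node a b)"
      using w(2) by auto
    then show ?thesis
      by blast
  next
    case False
    then show ?thesis
      using w by blast
  qed
qed auto

lemma csteps_children_not_roots:
  assumes "csteps E X Y" "disjoint_forest X" "Node x y \<in> X"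
  shows "x \<notin> Y" "y \<notin> Y"
proof -
  obtain w where w: "w \<in> Y" "leaves x \<union> leaves y \<subseteq> leaves w"
    using csteps_leaves_mono[OF assms(1,3)] by auto
  have Y: "disjoint_forest Y"
    using csteps_disjoint_forest[OF assms(1,2)] .
  have disj: "leaves x \<inter> leaves y = {}"
    using disjoint_forest_distinct_leaves[OF assms(2,3)] by simp
  show "x \<notin> Y"
  proof
    assume "x \<in> Y"
    then have "x = w"
      using disjoint_forest_leaves_subset[OF Y _ w(1)] w(2) by blast
    then show False
      using w(2) disj leaves_nonempty[of y] by blast
  qed
  show "y \<notin> Y"
  proof
    assume "y \<in> Y"
    then have "y = w"
      using disjoint_forest_leaves_subset[OF Y _ w(1)] w(2) by blast
    then show False
      using w(2) disj leaves_nonempty[of x] by blast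
  qed
qed

lemma csteps_node_formed:
  "csteps E X Y \<Longrightarrow> w \<in> Y \<Longrightarrow> Node p q \<in> subtrees w \<Longrightarrow> (\<forall>u\<in>X. Node p q \<notin> subtrees u) \<Longrightarrow>
   \<exists>S. csteps E X S \<and> p \<in> S \<and> q \<in> S \<and> (p, q) \<in> qrel E S
     \<and> acyclic (qrel E (insert (Node p q) (S - {p, q}))) \<and> csteps E (insert (Node p q) (S - {p, q})) Y"
proof (induction arbitrary: w rule: csteps.induct)
  case (step S S' a b)
  have extend: "csteps E M (insert (Node a b) (S' - {a, b}))" if "csteps E M S'" for M
    using csteps.step[OF that step.hyps(2-5)] .
  show ?case
  proof (cases "w = Node a b")
    case True
    show ?thesis
    proof (cases "Node p q = Node a b")
      case True
      then show ?thesis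
        using step.hyps by (auto intro: csteps.refl)
    next
      case False
      then have "Node p q \<in> subtrees a \<or> Node p q \<in> subtrees b"
        using step.prems \<open>w = Node a b\<close> by auto
      then obtain w' where "w' \<in> S'" "Node p q \<in> subtrees w'"
        using step.hyps by blast
      then show ?thesis
        using step.IH[OF _ _ step.prems(3)] extend by blast
    qed
  next
    case False
    then have "w \<in> S'"
      using step.prems by auto
    then show ?thesis
      using step.IH[OF _ step.prems(2,3)] extend by blast
  qed
qed blast

lemma csteps_Leaf_node_formed:
  assumes "csteps E (Leaf ` V) Y" "acyclic (qrel E (Leaf ` V))" "w \<in> Y" "Node p q \<in> subtrees w"
  obtains S where "csteps E (Leaf ` V) S" "p \<in> S" "q \<in> S" "p \<noteq> q"
    "has_edge E (leaves p) (leaves q)" "\<not> has_edge E (leaves q) (leaves p)"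
    "acyclic (qrel E (insert (Node p q) (S - {p, q})))" "csteps E (insert (Node p q) (S - {p, q})) Y"
proof -
  have "\<forall>u\<in>Leaf ` V. Node p q \<notin> subtrees u"
    by auto
  then obtain S where S: "csteps E (Leaf ` V) S" "p \<in> S" "q \<in> S" "(p, q) \<in> qrel E S"
    "acyclic (qrel E (insert (Node p q) (S - {p, q})))" "csteps E (insert (Node p q) (S - {p, q})) Y"
    using csteps_node_formed[OF assms(1,3,4)] by blast
  have "(q, p) \<notin> qrel E S"
    using acyclic_asym[OF csteps_acyclic[OF S(1) assms(2)] S(4)] .
  with S show ?thesis
    using that by (auto simp: qrel_iff)
qed

lemma acyclic_qrel_image:
  assumes "inj_on f Z" "\<And>u. u \<in> Z \<Longrightarrow> leaves (f u) = leaves u" "acyclic (qrel E Z)"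
  shows "acyclic (qrel E (f ` Z))"
proof (rule acyclic_collapse[OF _ assms(3)])
  show "acyclic {}"
    by (simp add: acyclic_def)
next
  fix x y assume "(x, y) \<in> qrel E (f ` Z)"
  then show "(inv_into Z f x, inv_into Z f y) \<in> qrel E Z \<or> inv_into Z f x = inv_into Z f y \<and> (x, y) \<in> {}"
    using assms(1,2) by (auto simp: qrel_iff inv_into_into)
qed

lemma acyclic_qrel_split:
  assumes "Node p q \<in> Z" "p \<noteq> q" "acyclic (qrel E Z)" "\<not> has_edge E (leaves q) (leaves p)"
  shows "acyclic (qrel E (insert p (insert q (Z - {Node p q}))))"
proof -
  define f where "f u = (if u = p \<or> u = q then Node p q else u)" for u
  have "leaves u \<subseteq> leaves (f u)" for u
    unfolding f_def by auto
  then have "(f v, f w) \<in> qrel E Z \<or> f v = f w \<and> (v, w) \<in> {(p, q)}"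
    if "(v, w) \<in> qrel E (insert p (insert q (Z - {Node p q})))" for v w
    using that assms(1,4) has_edge_mono unfolding qrel_iff by (simp add: f_def) blast
  moreover have "acyclic {(p, q)}"
    using assms(2) by (auto simp: acyclic_def trancl_insert)
  ultimately show ?thesis
    using acyclic_collapse assms(3) by metis
qed

section \<open>Reordering contraction sequences\<close>

lemma csteps_postpone_merge:
  "csteps E S1 S2 \<Longrightarrow> S1 = insert (Node a b) (S - {a, b}) \<Longrightarrow> a \<in> S \<Longrightarrow> b \<in> S \<Longrightarrow> a \<noteq> b
   \<Longrightarrow> disjoint_forest S \<Longrightarrow> Node a b \<in> S2 \<Longrightarrow> \<not> has_edge E (leaves b) (leaves a)
   \<Longrightarrow> csteps E S (insert a (insert b (S2 - {Node a b})))"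
proof (induction rule: csteps.induct)
  case (refl S1)
  then have "Node a b \<notin> S"
    using csteps_children_not_roots[OF csteps.refl] by blast
  then have "insert a (insert b (S1 - {Node a b})) = S"
    using refl.prems(1-3) by auto
  then show ?case
    using csteps.refl by metis
next
  case (step S1 S' x y)
  let ?S2 = "insert (Node x y) (S' - {x, y})"
  have F1: "disjoint_forest S1"
    using disjoint_forest_merge[OF step.prems(5,2,3,4)] step.prems(1) by simp
  have ab_S': "a \<notin> S'" "b \<notin> S'"
    using csteps_children_not_roots[OF step.hyps(1) F1] step.prems(1) by blast+
  have xy: "x \<noteq> y"
    using step.hyps(4) by (simp add: qrel_iff)
  have F2: "disjoint_forest ?S2"
    using disjoint_forest_merge[OF csteps_disjoint_forest[OF step.hyps(1) F1] step.hyps(2,3) xy] .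
  have "Node x y \<noteq> Node a b"
    using ab_S'(1) step.hyps(2) by blast
  then have ab_node: "Node a b \<in> S' - {x, y}"
    using step.prems(6) by auto
  have "a \<notin> ?S2" "b \<notin> ?S2"
    using csteps_children_not_roots[OF csteps.refl F2 step.prems(6)] by blast+
  let ?T = "insert a (insert b (S' - {Node a b}))"
  have IH: "csteps E S ?T"
    using step.IH[OF step.prems(1-5) _ step.prems(7)] ab_node by blast
  have eq: "insert a (insert b (?S2 - {Node a b})) = insert (Node x y) (?T - {x, y})"
    using step.hyps(2,3) ab_S' ab_node \<open>a \<notin> ?S2\<close> \<open>b \<notin> ?S2\<close> \<open>Node x y \<noteq> Node a b\<close> by auto
  have "x \<in> ?T" "y \<in> ?T"
    using step.hyps(2,3) ab_node by auto
  moreover have "(x, y) \<in> qrel E ?T"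
    using step.hyps(4) calculation by (auto simp: qrel_iff)
  moreover have "acyclic (qrel E (insert (Node x y) (?T - {x, y})))"
    using acyclic_qrel_split[OF step.prems(6,4) step.hyps(5) step.prems(7)] eq by simp
  ultimately show ?case
    using csteps.step[OF IH] eq by metis
qed

lemma csteps_merge_twice:
  assumes F: "disjoint_forest W" and xyz: "x \<in> W" "y \<in> W" "z \<in> W" "x \<noteq> y" "x \<noteq> z" "y \<noteq> z"
    and exy: "has_edge E (leaves x) (leaves y)"
    and pq: "p = Node x y \<and> q = z \<or> p = z \<and> q = Node x y"
    and epq: "has_edge E (leaves p) (leaves q)" and nqp: "\<not> has_edge E (leaves q) (leaves p)"
    and ac: "acyclic (qrel E (insert (Node p q) (W - {x, y, z})))"
  shows "csteps E W (insert (Node p q) (W - {x, y, z}))"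
proof -
  let ?W1 = "insert (Node x y) (W - {x, y})"
  have "Node x y \<notin> W"
    using csteps_children_not_roots[OF csteps.refl F] xyz(1) by blast
  moreover have "Node p q \<notin> W"
    using disjoint_forest_leaves_subset[OF F xyz(1)] pq by fastforce
  ultimately have split_eq: "insert p (insert q (insert (Node p q) (W - {x, y, z}) - {Node p q})) = ?W1"
    and merge_eq: "insert (Node p q) (?W1 - {p, q}) = insert (Node p q) (W - {x, y, z})"
    using pq xyz by auto
  have "p \<noteq> q"
    using pq \<open>Node x y \<notin> W\<close> xyz(3) by auto
  have "acyclic (qrel E ?W1)"
    using acyclic_qrel_split[OF _ \<open>p \<noteq> q\<close> ac nqp] split_eq by simp
  then have "csteps E W ?W1"
    using csteps.step[OF csteps.refl[of E W] xyz(1,2)] xyz(1,2,4) exy by (simp add: qrel_iff)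
  moreover have "p \<in> ?W1" "q \<in> ?W1"
    using pq xyz by auto
  moreover have "(p, q) \<in> qrel E ?W1"
    using calculation(2,3) \<open>p \<noteq> q\<close> epq by (simp add: qrel_iff)
  ultimately show ?thesis
    using csteps.step[of E W ?W1 p q] ac merge_eq by simp
qed

primrec replace_subtree :: "'v btree \<Rightarrow> 'v btree \<Rightarrow> 'v btree \<Rightarrow> 'v btree" where
  "replace_subtree s s' (Leaf v) = (if Leaf v = s then s' else Leaf v)"
| "replace_subtree s s' (Node l r) =
     (if Node l r = s then s' else Node (replace_subtree s s' l) (replace_subtree s s' r))"

lemma replace_subtree_self [simp]: "replace_subtree s s' s = s'"
  by (cases s) auto

lemma leaves_replace_subtree: "leaves s' = leaves s \<Longrightarrow> leaves (replace_subtree s s' u) = leaves u"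
  by (induction u) auto

lemma replace_subtree_id: "s \<notin> subtrees u \<Longrightarrow> replace_subtree s s' u = u"
  by (induction u) auto

lemma replace_subtree_image:
  assumes "disjoint_forest X" "s \<in> X"
  shows "replace_subtree s s' ` X = insert s' (X - {s})"
proof -
  have "replace_subtree s s' u = u" if "u \<in> X - {s}" for u
  proof (rule replace_subtree_id)
    show "s \<notin> subtrees u"
      using that disjoint_forest_leaves_subset[OF assms(1,2)] leaves_subtree by blast
  qed
  then show ?thesis
    using assms(2) by force
qed

lemma clusters_replace_subtree:
  "distinct_leaves u \<Longrightarrow> s \<in> subtrees u \<Longrightarrow> leaves s' = leaves s \<Longrightarrow>
   clusters (replace_subtree s s' u) = (clusters u - clusters s) \<union> clusters s'"
proof (induction u)
  case (Leaf v)
  then show ?case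
    by auto
next
  case (Node l r)
  show ?case
  proof (cases "Node l r = s")
    case False
    have disj: "leaves l \<inter> leaves r = {}"
      using Node.prems(1) by simp
    have untouched: "replace_subtree s s' x = x" "clusters x \<inter> clusters s = {}"
      if "leaves s \<inter> leaves x = {}" for x
    proof -
      have "s \<notin> subtrees x"
        using leaves_subtree[of s x] that leaves_nonempty[of s] by blast
      then show "replace_subtree s s' x = x"
        by (rule replace_subtree_id)
      show "clusters x \<inter> clusters s = {}"
        using clusters_disjoint[of x s] that by blast
    qed
    have root: "leaves l \<union> leaves r \<notin> clusters s"
      if "leaves s \<subseteq> leaves l \<or> leaves s \<subseteq> leaves r"
      using that disj cluster_subset_leaves[of _ s] leaves_nonempty[of l] leaves_nonempty[of r] by blast
    have "s \<in> subtrees l \<or> s \<in> subtrees r"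
      using False Node.prems(2) by auto
    then show ?thesis
    proof
      assume sl: "s \<in> subtrees l"
      then have "leaves s \<inter> leaves r = {}"
        using leaves_subtree disj by blast
      then have "replace_subtree s s' (Node l r) = Node (replace_subtree s s' l) r"
        using False untouched(1) by simp
      moreover have "clusters (replace_subtree s s' l) = (clusters l - clusters s) \<union> clusters s'"
        using Node.IH(1) Node.prems sl by simp
      ultimately show ?thesis
        using untouched(2) root leaves_subtree[OF sl] leaves_replace_subtree[OF Node.prems(3)]
          \<open>leaves s \<inter> leaves r = {}\<close> by auto
    next
      assume sr: "s \<in> subtrees r"
      then have "leaves s \<inter> leaves l = {}"
        using leaves_subtree disj by blast
      then have "replace_subtree s s' (Node l r) = Node l (replace_subtree s s' r)"
        using False untouched(1) by simp
      moreover have "clusters (replace_subtree s s' r) = (clusters r - clusters s) \<union> clusters s'"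
        using Node.IH(2) Node.prems sr by simp
      ultimately show ?thesis
        using untouched(2) root leaves_subtree[OF sr] leaves_replace_subtree[OF Node.prems(3)]
          \<open>leaves s \<inter> leaves l = {}\<close> by auto
    qed
  qed auto
qed

lemma csteps_replace_subtree:
  "csteps E X Y \<Longrightarrow> s \<in> X \<Longrightarrow> disjoint_forest X \<Longrightarrow> leaves s' = leaves s
   \<Longrightarrow> csteps E (replace_subtree s s' ` X) (replace_subtree s s' ` Y)"
proof (induction rule: csteps.induct)
  case (step X Y' x y)
  let ?f = "replace_subtree s s'" and ?Y = "insert (Node x y) (Y' - {x, y})"
  have leaves_f: "leaves (?f u) = leaves u" for u
    using leaves_replace_subtree[OF step.prems(3)] .
  have F': "disjoint_forest Y'"
    using csteps_disjoint_forest[OF step.hyps(1) step.prems(2)] .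
  have xy: "x \<noteq> y"
    using step.hyps(4) by (simp add: qrel_iff)
  have "Node x y \<noteq> s"
    using csteps_children_not_roots[OF step.hyps(1) step.prems(2)] step.prems(1) step.hyps(2) by blast
  then have f_Node: "?f (Node x y) = Node (?f x) (?f y)"
    by simp
  have inj: "inj_on ?f Y'" "inj_on ?f ?Y"
    using disjoint_forest_inj_on[OF F'] disjoint_forest_inj_on[OF disjoint_forest_merge[OF F' step.hyps(2,3) xy]]
      leaves_f by blast+
  have img: "?f ` ?Y = insert (Node (?f x) (?f y)) (?f ` Y' - {?f x, ?f y})"
    using inj_on_image_set_diff[OF inj(1)] step.hyps(2,3) f_Node by auto
  have "?f x \<in> ?f ` Y'" "?f y \<in> ?f ` Y'" "?f x \<noteq> ?f y"
    using step.hyps(2,3) xy inj(1) unfolding inj_on_def by auto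
  then have "(?f x, ?f y) \<in> qrel E (?f ` Y')"
    using step.hyps(4) leaves_f by (auto simp: qrel_iff)
  moreover have "acyclic (qrel E (?f ` ?Y))"
    using acyclic_qrel_image[OF inj(2) _ step.hyps(5)] leaves_f by blast
  ultimately show ?case
    using csteps.step[OF step.IH[OF step.prems]] img \<open>?f x \<in> ?f ` Y'\<close> \<open>?f y \<in> ?f ` Y'\<close> by metis
qed (rule csteps.refl)

lemma csteps_rotate_triple:
  assumes F: "disjoint_forest W" and abd: "a \<in> W" "b \<in> W" "d \<in> W" "a \<noteq> b" "a \<noteq> d" "b \<noteq> d"
    and ab: "has_edge E (leaves a) (leaves b)" "\<not> has_edge E (leaves b) (leaves a)"
    and s: "s = Node p q" "p = Node a b \<and> q = d \<or> p = d \<and> q = Node a b"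
    and pq: "has_edge E (leaves p) (leaves q)" "\<not> has_edge E (leaves q) (leaves p)"
    and ac: "\<And>s'. leaves s' = leaves s \<Longrightarrow> acyclic (qrel E (insert s' (W - {a, b, d})))"
  obtains s' N where "leaves s' = leaves s"
    "clusters s' = insert (leaves s) (insert N (clusters a \<union> clusters b \<union> clusters d))"
    "N = leaves a \<union> leaves d \<or> N = leaves b \<union> leaves d"
    "csteps E W (insert s' (W - {a, b, d}))"
proof -
  have perm: "{b, d, a} = {a, b, d}" "{a, d, b} = {a, b, d}" "{d, a, b} = {a, b, d}" "{d, b, a} = {a, b, d}"
    by auto
  consider "p = Node a b" "q = d" "has_edge E (leaves b) (leaves d)"
    | "p = Node a b" "q = d" "has_edge E (leaves a) (leaves d)" "\<not> has_edge E (leaves b) (leaves d)"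
    | "p = d" "q = Node a b" "has_edge E (leaves d) (leaves a)"
    | "p = d" "q = Node a b" "has_edge E (leaves d) (leaves b)" "\<not> has_edge E (leaves d) (leaves a)"
    using s(2) pq(1)
    by (cases "has_edge E (leaves b) (leaves d)"; cases "has_edge E (leaves d) (leaves a)") auto
  then show ?thesis
  proof cases
    case 1
    let ?s' = "Node a (Node b d)"
    have "csteps E W (insert ?s' (W - {b, d, a}))"
      by (rule csteps_merge_twice[OF F abd(2,3,1) abd(6) abd(4)[symmetric] abd(5)[symmetric] 1(3)])
        (use ab pq 1 ac[of ?s'] s perm in auto)
    then show ?thesis
      by (intro that[of ?s' "leaves b \<union> leaves d"]) (use s 1 perm in auto)
  next
    case 2
    let ?s' = "Node (Node a d) b"
    have "csteps E W (insert ?s' (W - {a, d, b}))"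
      by (rule csteps_merge_twice[OF F abd(1,3,2) abd(5) abd(4) abd(6)[symmetric] 2(3)])
        (use ab pq 2 ac[of ?s'] s perm in auto)
    then show ?thesis
      by (intro that[of ?s' "leaves a \<union> leaves d"]) (use s 2 perm in auto)
  next
    case 3
    let ?s' = "Node (Node d a) b"
    have "csteps E W (insert ?s' (W - {d, a, b}))"
      by (rule csteps_merge_twice[OF F abd(3,1,2) abd(5)[symmetric] abd(6)[symmetric] abd(4) 3(3)])
        (use ab pq 3 ac[of ?s'] s perm in auto)
    then show ?thesis
      by (intro that[of ?s' "leaves a \<union> leaves d"]) (use s 3 perm in auto)
  next
    case 4
    let ?s' = "Node a (Node d b)"
    have "csteps E W (insert ?s' (W - {d, b, a}))"
      by (rule csteps_merge_twice[OF F abd(3,2,1) abd(6)[symmetric] abd(5)[symmetric] abd(4)[symmetric] 4(3)])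
        (use ab pq 4 ac[of ?s'] s perm in auto)
    then show ?thesis
      by (intro that[of ?s' "leaves b \<union> leaves d"]) (use s 4 perm in auto)
  qed
qed

lemma csteps_Leaf_unmerge_triple:
  assumes cs: "csteps E (Leaf ` V) {T}" and ac0: "acyclic (qrel E (Leaf ` V))"
    and sT: "Node p q \<in> subtrees T" and pq: "p = Node a b \<and> q = d \<or> p = d \<and> q = Node a b"
  obtains R where "csteps E (Leaf ` V) (insert a (insert b (insert d R)))"
    "csteps E (Leaf ` V) (insert (Node p q) R)" "csteps E (insert (Node p q) R) {T}"
    "a \<notin> R" "b \<notin> R" "d \<notin> R" "Node p q \<notin> R" "a \<noteq> b" "a \<noteq> d" "b \<noteq> d"
    "has_edge E (leaves a) (leaves b)" "\<not> has_edge E (leaves b) (leaves a)"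
    "has_edge E (leaves p) (leaves q)" "\<not> has_edge E (leaves q) (leaves p)"
proof -
  obtain S' where S': "csteps E (Leaf ` V) S'" "p \<in> S'" "q \<in> S'" "p \<noteq> q"
    "has_edge E (leaves p) (leaves q)" "\<not> has_edge E (leaves q) (leaves p)"
    "acyclic (qrel E (insert (Node p q) (S' - {p, q})))" "csteps E (insert (Node p q) (S' - {p, q})) {T}"
    using csteps_Leaf_node_formed[OF cs ac0 _ sT] by blast
  have F': "disjoint_forest S'"
    using csteps_disjoint_forest[OF S'(1) disjoint_forest_Leaf] .
  have c: "Node a b \<in> S'" "d \<in> S'" "d \<noteq> Node a b"
    using pq S'(2-4) by auto
  define R where "R = S' - {Node a b, d}"
  have R_eq: "S' - {p, q} = R"
    using pq unfolding R_def by auto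
  obtain S where S: "csteps E (Leaf ` V) S" "a \<in> S" "b \<in> S" "a \<noteq> b"
    "has_edge E (leaves a) (leaves b)" "\<not> has_edge E (leaves b) (leaves a)"
    "csteps E (insert (Node a b) (S - {a, b})) S'"
    using csteps_Leaf_node_formed[OF S'(1) ac0 c(1) subtrees_refl] by blast
  have ab: "a \<notin> S'" "b \<notin> S'"
    using csteps_children_not_roots[OF csteps.refl F' c(1)] by blast+
  have "Node p q \<notin> S'"
    using disjoint_forest_leaves_subset[OF F' S'(2)] by fastforce
  have "csteps E S (insert a (insert b (S' - {Node a b})))"
    using csteps_postpone_merge[OF S(7) HOL.refl S(2-4) csteps_disjoint_forest[OF S(1) disjoint_forest_Leaf]
        c(1) S(6)] .
  moreover have "S' - {Node a b} = insert d R"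
    using c(2,3) unfolding R_def by blast
  ultimately have W: "csteps E (Leaf ` V) (insert a (insert b (insert d R)))"
    using csteps_trans[OF S(1)] by simp
  have merged: "csteps E (Leaf ` V) (insert (Node p q) R)"
    using csteps.step[OF S'(1,2,3)] S'(2-5,7) R_eq by (simp add: qrel_iff)
  have R: "a \<notin> R" "b \<notin> R" "d \<notin> R" "Node p q \<notin> R" "a \<noteq> d" "b \<noteq> d"
    using ab c \<open>Node p q \<notin> S'\<close> unfolding R_def by auto
  show ?thesis
    using that[OF W merged S'(8)[unfolded R_eq] R(1-4) S(4) R(5,6) S(5,6) S'(5,6)] .
qed

lemma clusters_rotation:
  assumes T: "distinct_leaves T" "s \<in> subtrees T" and s: "s = Node (Node a b) d \<or> s = Node d (Node a b)"
    and s': "leaves s' = leaves s" "clusters s' = insert (leaves s) (insert N (clusters a \<union> clusters b \<union> clusters d))"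
  shows "clusters (replace_subtree s s' T) = insert N (clusters T - {leaves a \<union> leaves b})"
proof -
  let ?K = "clusters a \<union> clusters b \<union> clusters d"
  have "distinct_leaves s"
    using distinct_leaves_subtree[OF T] .
  then have disj: "leaves a \<inter> leaves b = {}" "(leaves a \<union> leaves b) \<inter> leaves d = {}"
    using s by auto
  have cs: "clusters s = insert (leaves s) (insert (leaves a \<union> leaves b) ?K)"
    using s clusters_three by auto
  have ls: "leaves s = leaves a \<union> leaves b \<union> leaves d"
    using s by auto
  have "\<not> leaves a \<union> leaves b \<subseteq> leaves a" "\<not> leaves a \<union> leaves b \<subseteq> leaves b"
    "\<not> leaves a \<union> leaves b \<subseteq> leaves d"
    using disj leaves_nonempty[of a] leaves_nonempty[of b] by blast+
  then have "leaves a \<union> leaves b \<notin> ?K"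
    using cluster_subset_leaves by blast
  moreover have "leaves a \<union> leaves b \<noteq> leaves s"
    using ls disj(2) leaves_nonempty[of d] by blast
  moreover have "clusters s \<subseteq> clusters T"
    using clusters_subtree[OF T(2)] .
  ultimately show ?thesis
    unfolding clusters_replace_subtree[OF T s'(1)] s'(2) cs by blast
qed

lemma csteps_rotate:
  assumes cs: "csteps E (Leaf ` V) {T}" and ac0: "acyclic (qrel E (Leaf ` V))"
    and sT: "s \<in> subtrees T" and s: "s = Node (Node a b) d \<or> s = Node d (Node a b)"
  obtains N T' where "N = leaves a \<union> leaves d \<or> N = leaves b \<union> leaves d" "csteps E (Leaf ` V) {T'}"
    "clusters T' = insert N (clusters T - {leaves a \<union> leaves b})"
proof -
  obtain p q where pq: "s = Node p q" "p = Node a b \<and> q = d \<or> p = d \<and> q = Node a b"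
    using s by blast
  obtain R where R: "csteps E (Leaf ` V) (insert a (insert b (insert d R)))"
    "csteps E (Leaf ` V) (insert s R)" "csteps E (insert s R) {T}"
    "a \<notin> R" "b \<notin> R" "d \<notin> R" "s \<notin> R" "a \<noteq> b" "a \<noteq> d" "b \<noteq> d"
    "has_edge E (leaves a) (leaves b)" "\<not> has_edge E (leaves b) (leaves a)"
    "has_edge E (leaves p) (leaves q)" "\<not> has_edge E (leaves q) (leaves p)"
    using csteps_Leaf_unmerge_triple[OF cs ac0 sT[unfolded pq(1)] pq(2)] pq(1) by metis
  let ?W = "insert a (insert b (insert d R))"
  have FW: "disjoint_forest ?W" and FX: "disjoint_forest (insert s R)"
    using csteps_disjoint_forest[OF R(1) disjoint_forest_Leaf] csteps_disjoint_forest[OF R(2) disjoint_forest_Leaf] .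
  have rest: "?W - {a, b, d} = R"
    using R(4-6) by auto
  have img: "replace_subtree s s' ` insert s R = insert s' R" for s'
    using replace_subtree_image[OF FX insertI1, of s'] R(7) by simp
  have "acyclic (qrel E (insert s' (?W - {a, b, d})))" if "leaves s' = leaves s" for s'
    using acyclic_qrel_image[OF disjoint_forest_inj_on[OF FX] _ csteps_acyclic[OF R(2) ac0]]
      leaves_replace_subtree[OF that] img rest by metis
  then obtain s' N where s': "leaves s' = leaves s"
    "clusters s' = insert (leaves s) (insert N (clusters a \<union> clusters b \<union> clusters d))"
    "N = leaves a \<union> leaves d \<or> N = leaves b \<union> leaves d" "csteps E ?W (insert s' (?W - {a, b, d}))"
    using csteps_rotate_triple[OF FW _ _ _ R(8-12) pq R(13,14)] by blast
  have "csteps E (Leaf ` V) (insert s' R)"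
    using csteps_trans[OF R(1) s'(4)] rest by simp
  moreover have "csteps E (insert s' R) {replace_subtree s s' T}"
    using csteps_replace_subtree[OF R(3) insertI1 FX s'(1)] img by simp
  ultimately have "csteps E (Leaf ` V) {replace_subtree s s' T}"
    by (rule csteps_trans)
  moreover have "distinct_leaves T"
    using disjoint_forest_distinct_leaves[OF csteps_disjoint_forest[OF cs disjoint_forest_Leaf]] by simp
  ultimately show ?thesis
    using that[OF s'(3)] clusters_rotation[OF _ sT s s'(1,2)] by blast
qed

section \<open>Contraction trees\<close>

lemma acyclic_qrel_Leaf:
  assumes "acyclic {(v, w). v \<in> V \<and> w \<in> V \<and> E v w}"
  shows "acyclic (qrel E (Leaf ` V))"
proof (rule acyclic_collapse[OF _ assms])
  show "acyclic {}"
    by (simp add: acyclic_def)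
next
  fix x y assume "(x, y) \<in> qrel E (Leaf ` V)"
  then show "((case x of Leaf v \<Rightarrow> v), (case y of Leaf v \<Rightarrow> v)) \<in> {(v, w). v \<in> V \<and> w \<in> V \<and> E v w}
      \<or> (case x of Leaf v \<Rightarrow> v) = (case y of Leaf v \<Rightarrow> v) \<and> (x, y) \<in> {}"
    unfolding qrel_def by auto
qed

definition contraction_trees :: "('v \<Rightarrow> 'v \<Rightarrow> bool) \<Rightarrow> 'v set \<Rightarrow> 'v set set set" where
  "contraction_trees E V = {clusters T | T. csteps E (Leaf ` V) {T}}"

lemma contraction_treesE:
  assumes "t \<in> contraction_trees E V"
  obtains T where "t = clusters T" "csteps E (Leaf ` V) {T}" "distinct_leaves T"
proof -
  obtain T where "t = clusters T" "csteps E (Leaf ` V) {T}"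
    using assms unfolding contraction_trees_def by blast
  moreover have "distinct_leaves T"
    using disjoint_forest_distinct_leaves[OF csteps_disjoint_forest[OF calculation(2) disjoint_forest_Leaf]] by simp
  ultimately show ?thesis
    using that by blast
qed

lemma contraction_trees_binary_hierarchy: "t \<in> contraction_trees E V \<Longrightarrow> binary_hierarchy t"
  by (metis contraction_treesE binary_hierarchy_clusters)

lemma contraction_trees_one_way:
  assumes ac: "acyclic (qrel E (Leaf ` V))" and t: "t \<in> contraction_trees E V" and X: "splits t X Y Z"
  shows "one_way E Y Z"
proof -
  obtain T where T: "t = clusters T" "csteps E (Leaf ` V) {T}" "distinct_leaves T"
    using contraction_treesE[OF t] .
  obtain x where x: "x \<in> subtrees T" "leaves x = X"
    using cluster_subtree_ex splitsD(1)[OF X] T(1) by blast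
  obtain y z where yz: "x = Node y z \<or> x = Node z y" "leaves y = Y" "leaves z = Z"
    using splits_clusters_Node[OF T(3) x(1)] X T(1) x(2) by blast
  have "one_way E (leaves p) (leaves q)" if "Node p q \<in> subtrees T" for p q
    using csteps_Leaf_node_formed[OF T(2) ac _ that] unfolding one_way_def by blast
  then show ?thesis
    using yz x(1) one_way_sym by blast
qed

lemma contraction_trees_flip_exists:
  assumes ac: "acyclic (qrel E (Leaf ` V))" and t: "t \<in> contraction_trees E V"
    and C: "splits t C A B" and P: "splits t P C D"
  obtains N where "N = A \<union> D \<or> N = B \<union> D" "insert N (t - {C}) \<in> contraction_trees E V"
proof -
  obtain T where T: "t = clusters T" "csteps E (Leaf ` V) {T}" "distinct_leaves T"
    using contraction_treesE[OF t] .
  obtain x where x: "x \<in> subtrees T" "leaves x = P"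
    using cluster_subtree_ex splitsD(1)[OF P] T(1) by blast
  obtain c d where cd: "x = Node c d \<or> x = Node d c" "leaves c = C" "leaves d = D"
    using splits_clusters_Node[OF T(3) x(1)] P T(1) x(2) by blast
  have "c \<in> subtrees T"
    using cd(1) subtrees_trans[OF x(1)] by auto
  then obtain a b where ab: "c = Node a b \<or> c = Node b a" "leaves a = A" "leaves b = B"
    using splits_clusters_Node[OF T(3)] C T(1) cd(2) by blast
  note flip = that
  have rotate: "thesis" if c': "c = Node a' b'" and AB: "{leaves a', leaves b'} = {A, B}" for a' b'
  proof -
    have "x = Node (Node a' b') d \<or> x = Node d (Node a' b')"
      using cd(1) c' by blast
    then obtain N T' where N: "N = leaves a' \<union> leaves d \<or> N = leaves b' \<union> leaves d"
      and T': "csteps E (Leaf ` V) {T'}" "clusters T' = insert N (clusters T - {leaves a' \<union> leaves b'})"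
      by (rule csteps_rotate[OF T(2) ac x(1)])
    have "leaves a' \<union> leaves b' = C"
      using AB cd(2) splitsD(7)[OF C] by (auto simp: doubleton_eq_iff)
    then have "insert N (t - {C}) \<in> contraction_trees E V"
      using T' T(1) unfolding contraction_trees_def by auto
    moreover have "N = A \<union> D \<or> N = B \<union> D"
      using N AB cd(3) by (auto simp: doubleton_eq_iff)
    ultimately show thesis
      using flip by blast
  qed
  show thesis
    using ab rotate by (auto simp: insert_commute)
qed

lemma contraction_trees_not_both_flips:
  assumes ac: "acyclic (qrel E (Leaf ` V))" and t: "t \<in> contraction_trees E V"
    and C: "splits t C A B" and P: "splits t P C D"
    and tA: "insert (A \<union> D) (t - {C}) \<in> contraction_trees E V"
    and tB: "insert (B \<union> D) (t - {C}) \<in> contraction_trees E V"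
  shows False
proof -
  have lam: "laminar t"
    using binary_hierarchy_laminar[OF contraction_trees_binary_hierarchy[OF t]] .
  note one_way = contraction_trees_one_way[OF ac]
  note flipA = flip_splits[OF lam C P] and flipB = flip_splits[OF lam splits_sym[OF C] P]
  have "one_way E A B" "one_way E (A \<union> B) D"
    using one_way[OF t C] one_way[OF t P] splitsD(7)[OF C] by simp_all
  moreover have "one_way E A D" "one_way E (A \<union> D) B"
    using one_way[OF tA flipA(1)] one_way[OF tA flipA(2)] .
  moreover have "one_way E B D" "one_way E (B \<union> D) A"
    using one_way[OF tB flipB(1)] one_way[OF tB flipB(2)] .
  ultimately show False
    by (rule one_way_pairings_contradict)
qed

theorem contraction_trees_flip_unique:
  assumes ac: "acyclic (qrel E (Leaf ` V))" and t: "t \<in> contraction_trees E V" and e: "internal_edge t e"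
  shows "\<exists>!(t', e'). t' \<in> contraction_trees E V \<and> t' \<noteq> t \<and> internal_edge t' e'
                    \<and> contract_edge t e = contract_edge t' e'"
proof -
  have H: "binary_hierarchy t"
    using contraction_trees_binary_hierarchy[OF t] .
  obtain A B P D where C: "splits t e A B" and P: "splits t P e D"
    using internal_edge_splits[OF H e] .
  obtain N where N: "N = A \<union> D \<or> N = B \<union> D" "insert N (t - {e}) \<in> contraction_trees E V"
    using contraction_trees_flip_exists[OF ac t C P] .
  have "internal_edge (insert N (t - {e})) N" "N \<notin> t"
    using N(1) flip_internal_edge[OF H C P] flip_internal_edge[OF H splits_sym[OF C] P]
      flip_not_in[OF binary_hierarchy_laminar[OF H] C P]
      flip_not_in[OF binary_hierarchy_laminar[OF H] splits_sym[OF C] P] by auto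
  then have flip: "insert N (t - {e}) \<noteq> t" "internal_edge (insert N (t - {e})) N"
    "contract_edge t e = contract_edge (insert N (t - {e})) N"
    unfolding contract_edge_def by auto
  show ?thesis
  proof (rule ex1I[of _ "(insert N (t - {e}), N)"])
    fix p assume "case p of (t', e') \<Rightarrow> t' \<in> contraction_trees E V \<and> t' \<noteq> t \<and> internal_edge t' e'
                    \<and> contract_edge t e = contract_edge t' e'"
    then obtain t' e' where p: "p = (t', e')" "t' \<in> contraction_trees E V" "t' \<noteq> t" "internal_edge t' e'"
      "t' - {e'} = t - {e}"
      unfolding contract_edge_def by auto
    have "e' = A \<union> D \<or> e' = B \<union> D"
      using flip_candidates[OF H contraction_trees_binary_hierarchy[OF p(2)] C P p(4,5,3)] .
    moreover have "t' = insert e' (t - {e})"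
      using insert_remove_eq(2)[OF p(3)] p(4,5) splitsD(1)[OF C] unfolding internal_edge_def by blast
    ultimately have "e' = N"
      using N contraction_trees_not_both_flips[OF ac t C P] p(2) by blast
    then show "p = (insert N (t - {e}), N)"
      using p(1) \<open>t' = insert e' (t - {e})\<close> by simp
  qed (use N(2) flip in simp)
qed

theorem lemma1:
  assumes "graph_G Gam sig lam inp ilab olab"
    and "t \<in> T_G Gam sig lam inp"
    and "internal_edge t e"
  shows "\<exists>!(t', e'). t' \<in> T_G Gam sig lam inp \<and> t' \<noteq> t \<and> internal_edge t' e'
                    \<and> contract_edge t e = contract_edge t' e'"
proof -
  have "T_G Gam sig lam inp = contraction_trees (thick Gam sig inp) lam"
    unfolding T_G_def contraction_trees_def ..
  moreover have "acyclic (qrel (thick Gam sig inp) (Leaf ` lam))"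
    using assms(1) acyclic_qrel_Leaf unfolding graph_G_def thick_rel_def by blast
  ultimately show ?thesis
    using contraction_trees_flip_unique assms(2,3) by simp
qed

end
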